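(* Let $G$ be a bipartite super edge-magic simple graph with stable sets $X$ and $Y$, and suppose $G\cong H_1\oplus H_2$ is a decomposition of $G$. Then $\lim_{n\to\infty}|\sigma_{S_{2n}(G;H_1,H_2)}|=\infty$.
   Context: For a $(p,q)$-graph $G$ ($p$ vertices, $q$ edges), an edge-magic labeling is a bijection $f:V(G)\cup E(G)\to[1,p+q]$ such that $f(x)+f(xy)+f(y)$ equals a constant (the valence) for every edge $xy$; it is super edge-magic if moreover $f(V(G))=[1,p]$. For a graph $H$, $\sigma_H$ is the set of integers that are valences of super edge-magic labelings of $H$. A decomposition $G\cong H_1\oplus H_2$ means $H_1,H_2$ are subgraphs of $G$ whose edge sets partition $E(G)$. Writing $X=\{x_i\}_{i=1}^s$, $Y=\{y_j\}_{j=1}^t$, $S_{2n}(G;H_1,H_2)$ is the graph with vertex set $X\cup Y\cup\bigcup_{k=1}^n X_k\cup\bigcup_{k=1}^n Y_k$, where $X_k=\{x_i^k\}_{i=1}^s$, $Y_k=\{y_j^k\}_{j=1}^t$ are new vertices, and edge set $E(G)\cup\{x_iy_j^k: x_iy_j\in E(H_1),\,k\in[1,n]\}\cup\{x_i^ky_j: x_iy_j\in E(H_2),\,k\in[1,n]\}$. *)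

theory Defs
  imports Main "HOL-Library.Extended_Nat"
begin

definition simple_graph :: "'a set \<Rightarrow> 'a set set \<Rightarrow> bool" where
  "simple_graph V E \<longleftrightarrow> finite V \<and>
     (\<forall>e\<in>E. \<exists>x y. x \<in> V \<and> y \<in> V \<and> x \<noteq> y \<and> e = {x, y})"

definition sem_labeling :: "'a set \<Rightarrow> 'a set set \<Rightarrow> ('a + 'a set \<Rightarrow> int) \<Rightarrow> int \<Rightarrow> bool" where
  "sem_labeling V E f k \<longleftrightarrow>
     bij_betw f (Inl ` V \<union> Inr ` E) {1 .. int (card V + card E)} \<and>
     f ` (Inl ` V) = {1 .. int (card V)} \<and>
     (\<forall>x y. {x, y} \<in> E \<longrightarrow> f (Inl x) + f (Inr {x, y}) + f (Inl y) = k)"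

definition super_edge_magic :: "'a set \<Rightarrow> 'a set set \<Rightarrow> bool" where
  "super_edge_magic V E \<longleftrightarrow> (\<exists>f k. sem_labeling V E f k)"

definition sigma :: "'a set \<Rightarrow> 'a set set \<Rightarrow> int set" where
  "sigma V E = {k. \<exists>f. sem_labeling V E f k}"

definition bipartite_with :: "'a set \<Rightarrow> 'a set set \<Rightarrow> 'a set \<Rightarrow> 'a set \<Rightarrow> bool" where
  "bipartite_with V E X Y \<longleftrightarrow> X \<inter> Y = {} \<and> X \<union> Y = V \<and>
     (\<forall>e\<in>E. \<exists>x\<in>X. \<exists>y\<in>Y. e = {x, y})"

definition ecard :: "'b set \<Rightarrow> enat" where
  "ecard A = (if finite A then enat (card A) else \<infinity>)"

text \<open>S_{2n}(G;H1,H2): vertex (v,0) is the original v, (v,k) with k \<in> [1,n] is the copy v^k.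
  Only the edge sets E1, E2 of H1, H2 matter.\<close>
definition S2n_V :: "'a set \<Rightarrow> 'a set \<Rightarrow> nat \<Rightarrow> ('a \<times> nat) set" where
  "S2n_V X Y n = (X \<union> Y) \<times> {0..n}"

definition S2n_E :: "'a set \<Rightarrow> 'a set \<Rightarrow> 'a set set \<Rightarrow> 'a set set \<Rightarrow> 'a set set \<Rightarrow> nat
    \<Rightarrow> ('a \<times> nat) set set" where
  "S2n_E X Y E E1 E2 n =
     {{(x, 0), (y, 0)} | x y. {x, y} \<in> E}
   \<union> {{(x, 0), (y, k)} | x y k. x \<in> X \<and> y \<in> Y \<and> {x, y} \<in> E1 \<and> k \<in> {1..n}}
   \<union> {{(x, k), (y, 0)} | x y k. x \<in> X \<and> y \<in> Y \<and> {x, y} \<in> E2 \<and> k \<in> {1..n}}"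

end

theory Submission
  imports Defs "HOL-Combinatorics.Transposition"
begin

text \<open>A labeling of a graph is super edge-magic iff its vertex labels are 1, ..., p and the
  edge sums f(x) + f(y) are pairwise distinct and form an interval; the valence is then p + q
  plus the least edge sum. Given such a labeling \<phi> of G and N = n + 1, label the copy
  v^j of v by N(\<phi>(v) - 1) + d(j) + 1, where d is a permutation of 0, ..., n with
  d(0) = t. Every edge of S_2n joins a vertex in copy 0 to a vertex in some copy j,
  so its sum is N(\<phi>(x) + \<phi>(y) - 2) + t + d(j) + 2; reading these numbers in base N shows
  that they again form an interval, so each t \<in> [0, n] yields a labeling, with valence
  N(k - 2) + t + 2. Hence \<sigma> has at least n + 1 elements.\<close>

lemma bij_betw_mixed_radix:
  fixes N a q :: int
  assumes "N > 0"
  shows "bij_betw (\<lambda>(u, r). N * u + r) ({a..<a + q} \<times> {0..<N}) {N * a..<N * (a + q)}"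
proof (rule bij_betw_imageI)
  have digits: "(N * u + r) div N = u" "(N * u + r) mod N = r" if "0 \<le> r" "r < N" for u r
    using that assms by simp_all
  show "inj_on (\<lambda>(u, r). N * u + r) ({a..<a + q} \<times> {0..<N})"
    by (rule inj_onI) (clarsimp, metis digits)
  show "(\<lambda>(u, r). N * u + r) ` ({a..<a + q} \<times> {0..<N}) = {N * a..<N * (a + q)}"
  proof (intro equalityI subsetI)
    fix w assume "w \<in> (\<lambda>(u, r). N * u + r) ` ({a..<a + q} \<times> {0..<N})"
    then obtain u r where "w = N * u + r" "a \<le> u" "u + 1 \<le> a + q" "0 \<le> r" "r < N" by auto
    moreover have "N * a \<le> N * u" "N * u + N \<le> N * (a + q)"
      using calculation assms mult_left_mono[of "u + 1" "a + q" N] by (simp_all add: algebra_simps)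
    ultimately show "w \<in> {N * a..<N * (a + q)}" unfolding atLeastLessThan_iff by linarith
  next
    fix w assume w: "w \<in> {N * a..<N * (a + q)}"
    have w_digits: "w = N * (w div N) + w mod N" "0 \<le> w mod N" "w mod N < N"
      using assms by simp_all
    have "N * a < N * (w div N + 1)" "N * (w div N) < N * (a + q)"
      using w w_digits unfolding distrib_left atLeastLessThan_iff by linarith+
    then have "w div N \<in> {a..<a + q}" using assms by simp
    then show "w \<in> (\<lambda>(u, r). N * u + r) ` ({a..<a + q} \<times> {0..<N})"
      using w_digits by (auto intro!: image_eqI[where x = "(w div N, w mod N)"])
  qed
qed

lemma bij_betw_image_of_comp:
  assumes "bij_betw (h \<circ> g) A C"
  shows "bij_betw h (g ` A) C"
  using assms by (auto simp: bij_betw_def image_comp intro: inj_on_imageI)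

lemma card_le_ecard:
  assumes "finite A" and "A \<subseteq> B"
  shows "enat (card A) \<le> ecard B"
  using assms by (auto simp: ecard_def intro: card_mono)

lemma sem_labeling_edge_sums:
  assumes "simple_graph V E" and "sem_labeling V E f k"
  shows "bij_betw (\<lambda>e. \<Sum>v\<in>e. f (Inl v)) E {k - int (card V) - int (card E)..<k - int (card V)}"
proof (rule bij_betw_imageI)
  have bij: "bij_betw f (Inl ` V \<union> Inr ` E) {1..int (card V + card E)}"
    and vertices: "f ` Inl ` V = {1..int (card V)}"
    and valence: "\<And>x y. {x, y} \<in> E \<Longrightarrow> f (Inl x) + f (Inr {x, y}) + f (Inl y) = k"
    using assms(2) by (simp_all add: sem_labeling_def)
  have edge_sum: "(\<Sum>v\<in>e. f (Inl v)) = k - f (Inr e)" if "e \<in> E" for e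
  proof -
    have "\<exists>x y. x \<noteq> y \<and> e = {x, y}"
      using assms(1) that unfolding simple_graph_def by metis
    then obtain x y where "x \<noteq> y" "e = {x, y}" by blast
    then show ?thesis using valence[of x y] that by (simp add: algebra_simps)
  qed
  have inj: "inj_on f (Inl ` V \<union> Inr ` E)" using bij by (simp add: bij_betw_def)
  then show "inj_on (\<lambda>e. \<Sum>v\<in>e. f (Inl v)) E"
    by (auto simp: inj_on_def edge_sum)
  have "f ` Inr ` E = f ` (Inl ` V \<union> Inr ` E) - f ` Inl ` V"
    by (subst inj_on_image_set_diff[OF inj, symmetric]) auto
  also have "\<dots> = {int (card V) + 1..int (card V) + int (card E)}"
    using bij vertices unfolding bij_betw_def by auto
  finally have edge_labels: "f ` Inr ` E = {int (card V) + 1..int (card V) + int (card E)}" .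
  have "(\<lambda>e. \<Sum>v\<in>e. f (Inl v)) ` E = (\<lambda>e. k - f (Inr e)) ` E"
    by (rule image_cong[OF refl edge_sum])
  also have "\<dots> = (-) k ` f ` Inr ` E" by (simp add: image_image)
  also have "\<dots> = {k - int (card V) - int (card E)..<k - int (card V)}"
    unfolding edge_labels by auto
  finally show "(\<lambda>e. \<Sum>v\<in>e. f (Inl v)) ` E = {k - int (card V) - int (card E)..<k - int (card V)}" .
qed

lemma sigma_if_consecutive_edge_sums:
  fixes L :: "'b \<Rightarrow> int"
  assumes "bij_betw L V {1..int (card V)}"
    and "bij_betw (\<lambda>e. \<Sum>v\<in>e. L v) E {m..<m + int (card E)}"
    and "\<forall>e\<in>E. \<exists>x y. x \<noteq> y \<and> e = {x, y}"
  shows "int (card V) + int (card E) + m \<in> sigma V E"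
proof -
  define K where "K = int (card V) + int (card E) + m"
  define f where "f = case_sum L (\<lambda>e. K - (\<Sum>v\<in>e. L v))"
  have "bij_betw ((-) K) {m..<m + int (card E)} {int (card V) + 1..int (card V + card E)}"
    by (auto simp: bij_betw_def inj_on_def K_def)
  then have "bij_betw (\<lambda>e. K - (\<Sum>v\<in>e. L v)) E {int (card V) + 1..int (card V + card E)}"
    using assms(2) by (auto dest: bij_betw_trans simp: comp_def)
  then have "bij_betw f (Inr ` E) {int (card V) + 1..int (card V + card E)}"
    by (auto simp: f_def bij_betw_def inj_on_def image_image)
  moreover have vertices: "bij_betw f (Inl ` V) {1..int (card V)}"
    using assms(1) by (auto simp: f_def bij_betw_def inj_on_def image_image)
  ultimately have "bij_betw f (Inl ` V \<union> Inr ` E) ({1..int (card V)} \<union> {int (card V) + 1..int (card V + card E)})"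
    by (intro bij_betw_combine) auto
  moreover have "{1..int (card V)} \<union> {int (card V) + 1..int (card V + card E)} = {1..int (card V + card E)}"
    by auto
  moreover have "f (Inl x) + f (Inr {x, y}) + f (Inl y) = K" if "{x, y} \<in> E" for x y
    using assms(3) that by (fastforce simp: f_def doubleton_eq_iff)
  ultimately have "sem_labeling V E f K"
    using vertices by (auto simp: sem_labeling_def bij_betw_def)
  then show ?thesis by (auto simp: sigma_def K_def)
qed

definition oriented_edges :: "'a set \<Rightarrow> 'a set \<Rightarrow> 'a set set \<Rightarrow> ('a \<times> 'a) set" where
  "oriented_edges X Y E = {(x, y). x \<in> X \<and> y \<in> Y \<and> {x, y} \<in> E}"

lemma bij_betw_oriented_edges:
  assumes "bipartite_with V E X Y"
  shows "bij_betw (\<lambda>(x, y). {x, y}) (oriented_edges X Y E) E"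
proof (rule bij_betw_imageI)
  have "X \<inter> Y = {}" using assms by (simp add: bipartite_with_def)
  then show "inj_on (\<lambda>(x, y). {x, y}) (oriented_edges X Y E)"
    by (auto simp: inj_on_def oriented_edges_def doubleton_eq_iff)
  show "(\<lambda>(x, y). {x, y}) ` oriented_edges X Y E = E"
    using assms by (force simp: oriented_edges_def bipartite_with_def)
qed

definition S2n_edge :: "'a set set \<Rightarrow> ('a \<times> 'a) \<times> nat \<Rightarrow> ('a \<times> nat) set" where
  "S2n_edge E1 = (\<lambda>((x, y), j). if {x, y} \<in> E1 then {(x, 0), (y, j)} else {(x, j), (y, 0)})"

lemma S2n_E_eq_image:
  assumes "bipartite_with V E X Y" and "E1 \<union> E2 = E" and "E1 \<inter> E2 = {}"
  shows "S2n_E X Y E E1 E2 n = S2n_edge E1 ` (oriented_edges X Y E \<times> {0..n})"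
proof (intro equalityI subsetI)
  fix e assume "e \<in> S2n_E X Y E E1 E2 n"
  then consider (base) x y where "e = {(x, 0), (y, 0)}" "{x, y} \<in> E"
    | (E1) x y j where "e = {(x, 0), (y, j)}" "x \<in> X" "y \<in> Y" "{x, y} \<in> E1" "j \<in> {1..n}"
    | (E2) x y j where "e = {(x, j), (y, 0)}" "x \<in> X" "y \<in> Y" "{x, y} \<in> E2" "j \<in> {1..n}"
    unfolding S2n_E_def by blast
  then show "e \<in> S2n_edge E1 ` (oriented_edges X Y E \<times> {0..n})"
  proof cases
    case base
    have "{x, y} \<in> (\<lambda>(x, y). {x, y}) ` oriented_edges X Y E"
      using base(2) bij_betw_imp_surj_on[OF bij_betw_oriented_edges[OF assms(1)]] by simp
    then obtain x' y' where "(x', y') \<in> oriented_edges X Y E" "{x, y} = {x', y'}" by auto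
    moreover have "e = S2n_edge E1 ((x', y'), 0)"
      using base(1) \<open>{x, y} = {x', y'}\<close> by (simp add: S2n_edge_def doubleton_eq_iff)
    ultimately show ?thesis by auto
  next
    case E1
    then show ?thesis using assms(2)
      by (auto simp: S2n_edge_def oriented_edges_def intro!: image_eqI[where x = "((x, y), j)"])
  next
    case E2
    then have "{x, y} \<notin> E1" using assms(3) by blast
    with E2 show ?thesis using assms(2)
      by (auto simp: S2n_edge_def oriented_edges_def intro!: image_eqI[where x = "((x, y), j)"])
  qed
next
  fix e assume "e \<in> S2n_edge E1 ` (oriented_edges X Y E \<times> {0..n})"
  then obtain x y j where "x \<in> X" "y \<in> Y" "{x, y} \<in> E" "j \<le> n" "e = S2n_edge E1 ((x, y), j)"
    by (auto simp: oriented_edges_def)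
  then show "e \<in> S2n_E X Y E E1 E2 n"
    using assms(2) by (cases "j = 0") (auto simp: S2n_edge_def S2n_E_def)
qed

definition S2n_label :: "('a \<Rightarrow> int) \<Rightarrow> nat \<Rightarrow> nat \<Rightarrow> 'a \<times> nat \<Rightarrow> int" where
  "S2n_label \<phi> n t = (\<lambda>(v, j). (int n + 1) * (\<phi> v - 1) + transpose 0 (int t) (int j) + 1)"

lemma bij_betw_digit:
  assumes "t \<le> n"
  shows "bij_betw (\<lambda>j. transpose 0 (int t) (int j)) {0..n} {0..<int n + 1}"
proof -
  have "bij_betw int {0..n} {0..<int n + 1}"
    by (auto simp: bij_betw_def image_int_atLeastAtMost)
  moreover have "bij_betw (transpose 0 (int t)) {0..<int n + 1} {0..<int n + 1}"
    using assms by simp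
  ultimately show ?thesis using bij_betw_trans by (fastforce simp: comp_def)
qed

lemma bij_betw_S2n_label:
  assumes "bij_betw \<phi> V {1..int (card V)}" and "t \<le> n"
  shows "bij_betw (S2n_label \<phi> n t) (V \<times> {0..n}) {1..int (card (V \<times> {0..n}))}"
proof -
  define N where "N = int n + 1"
  define d where "d = (\<lambda>j. transpose 0 (int t) (int j))"
  have "bij_betw (\<lambda>w. w - 1) {1..int (card V)} {0..<int (card V)}"
    by (auto simp: bij_betw_def)
  with assms(1) have "bij_betw (\<lambda>v. \<phi> v - 1) V {0..<int (card V)}"
    using bij_betw_trans by (fastforce simp: comp_def)
  then have digits: "bij_betw (map_prod (\<lambda>v. \<phi> v - 1) d) (V \<times> {0..n}) ({0..<0 + int (card V)} \<times> {0..<N})"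
    using bij_betw_digit[OF assms(2)] by (simp add: bij_betw_map_prod d_def N_def)
  have radix: "bij_betw (\<lambda>(u, r). N * u + r) ({0..<0 + int (card V)} \<times> {0..<N}) {N * 0..<N * (0 + int (card V))}"
    by (rule bij_betw_mixed_radix) (simp add: N_def)
  have shift: "bij_betw (\<lambda>w. w + 1) {N * 0..<N * (0 + int (card V))} {1..int (card (V \<times> {0..n}))}"
    by (auto simp: bij_betw_def card_cartesian_product N_def algebra_simps)
  from bij_betw_trans[OF bij_betw_trans[OF digits radix] shift] show ?thesis
    by (rule bij_betw_cong[THEN iffD1, rotated]) (auto simp: S2n_label_def N_def d_def)
qed

lemma S2n_label_edge_sum:
  assumes "x \<noteq> y"
  shows "(\<Sum>v\<in>S2n_edge E1 ((x, y), j). S2n_label \<phi> n t v)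
    = (int n + 1) * (\<phi> x + \<phi> y - 2) + transpose 0 (int t) (int j) + int t + 2"
  using assms by (simp add: S2n_edge_def S2n_label_def algebra_simps)

lemma bij_betw_S2n_edge_sums:
  assumes "bipartite_with V E X Y" and "t \<le> n"
    and "bij_betw (\<lambda>(x, y). \<phi> x + \<phi> y) (oriented_edges X Y E) {s..<s + int (card E)}"
  shows "bij_betw (\<lambda>z. \<Sum>v\<in>S2n_edge E1 z. S2n_label \<phi> n t v) (oriented_edges X Y E \<times> {0..n})
    {(int n + 1) * (s - 2) + int t + 2..<(int n + 1) * (s - 2 + int (card E)) + int t + 2}"
proof -
  define N where "N = int n + 1"
  define q where "q = int (card E)"
  define d where "d = (\<lambda>j. transpose 0 (int t) (int j))"
  have "bij_betw (\<lambda>w. w - 2) {s..<s + q} {s - 2..<s - 2 + q}"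
    by (auto simp: bij_betw_def intro: image_eqI[where x = "_ + 2"])
  from bij_betw_trans[OF assms(3)[folded q_def] this]
  have "bij_betw (\<lambda>(x, y). \<phi> x + \<phi> y - 2) (oriented_edges X Y E) {s - 2..<s - 2 + q}"
    by (rule bij_betw_cong[THEN iffD1, rotated]) auto
  then have digits: "bij_betw (map_prod (\<lambda>(x, y). \<phi> x + \<phi> y - 2) d)
      (oriented_edges X Y E \<times> {0..n}) ({s - 2..<s - 2 + q} \<times> {0..<N})"
    using bij_betw_digit[OF assms(2)] by (simp add: bij_betw_map_prod d_def N_def)
  have radix: "bij_betw (\<lambda>(u, r). N * u + r) ({s - 2..<s - 2 + q} \<times> {0..<N})
      {N * (s - 2)..<N * (s - 2 + q)}"
    by (rule bij_betw_mixed_radix) (simp add: N_def)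
  have shift: "bij_betw (\<lambda>w. w + int t + 2) {N * (s - 2)..<N * (s - 2 + q)}
      {N * (s - 2) + int t + 2..<N * (s - 2 + q) + int t + 2}"
    by (auto simp: bij_betw_def inj_on_def intro: image_eqI[where x = "_ - int t - 2"])
  have edge_sum: "(\<Sum>v\<in>S2n_edge E1 ((x, y), j). S2n_label \<phi> n t v)
      = (int n + 1) * (\<phi> x + \<phi> y - 2) + d j + int t + 2"
    if "((x, y), j) \<in> oriented_edges X Y E \<times> {0..n}" for x y j
  proof -
    have "x \<noteq> y" using assms(1) that by (auto simp: bipartite_with_def oriented_edges_def)
    then show ?thesis by (simp add: S2n_label_edge_sum d_def)
  qed
  from bij_betw_trans[OF bij_betw_trans[OF digits radix] shift, unfolded N_def q_def] show ?thesis
    by (rule bij_betw_cong[THEN iffD1, rotated]) (auto simp: edge_sum)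
qed

lemma sem_labeling_vertex_bij:
  assumes "sem_labeling V E f k"
  shows "bij_betw (\<lambda>v. f (Inl v)) V {1..int (card V)}"
proof -
  have "bij_betw f (Inl ` V) {1..int (card V)}"
    using assms by (auto simp: sem_labeling_def bij_betw_def intro: inj_on_subset)
  then show ?thesis by (auto simp: bij_betw_def inj_on_def image_image)
qed

lemma sem_labeling_oriented_edge_sums:
  assumes "simple_graph V E" and "bipartite_with V E X Y" and "sem_labeling V E f k"
  shows "bij_betw (\<lambda>(x, y). f (Inl x) + f (Inl y)) (oriented_edges X Y E)
    {k - int (card V) - int (card E)..<k - int (card V)}"
proof -
  have "X \<inter> Y = {}" using assms(2) by (simp add: bipartite_with_def)
  then have "x \<noteq> y" if "(x, y) \<in> oriented_edges X Y E" for x y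
    using that by (auto simp: oriented_edges_def)
  then have "((\<lambda>e. \<Sum>v\<in>e. f (Inl v)) \<circ> (\<lambda>(x, y). {x, y})) z = (\<lambda>(x, y). f (Inl x) + f (Inl y)) z"
    if "z \<in> oriented_edges X Y E" for z
    using that by (cases z) simp
  with bij_betw_trans[OF bij_betw_oriented_edges[OF assms(2)] sem_labeling_edge_sums[OF assms(1,3)]]
  show ?thesis by (rule bij_betw_cong[THEN iffD1, rotated])
qed

lemma S2n_valence_in_sigma:
  assumes "simple_graph V E" and "bipartite_with V E X Y" and "sem_labeling V E f k"
    and "E1 \<union> E2 = E" and "E1 \<inter> E2 = {}" and "t \<le> n"
  shows "(int n + 1) * (k - 2) + int t + 2 \<in> sigma (S2n_V X Y n) (S2n_E X Y E E1 E2 n)"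
proof -
  define \<phi> where "\<phi> v = f (Inl v)" for v
  define s where "s = k - int (card V) - int (card E)"
  define m where "m = (int n + 1) * (s - 2) + int t + 2"
  define P where "P = oriented_edges X Y E"
  have "V = X \<union> Y" and "X \<inter> Y = {}" using assms(2) by (auto simp: bipartite_with_def)
  then have vertices: "S2n_V X Y n = V \<times> {0..n}" by (simp add: S2n_V_def)
  have labels: "bij_betw (S2n_label \<phi> n t) (S2n_V X Y n) {1..int (card (S2n_V X Y n))}"
    unfolding vertices \<phi>_def using sem_labeling_vertex_bij[OF assms(3)] assms(6)
    by (rule bij_betw_S2n_label)
  have "bij_betw (\<lambda>(x, y). \<phi> x + \<phi> y) (oriented_edges X Y E) {s..<s + int (card E)}"
    using sem_labeling_oriented_edge_sums[OF assms(1-3)] by (simp add: \<phi>_def s_def)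
  then have "bij_betw ((\<lambda>e. \<Sum>v\<in>e. S2n_label \<phi> n t v) \<circ> S2n_edge E1) (P \<times> {0..n})
      {m..<m + (int n + 1) * int (card E)}"
    using bij_betw_S2n_edge_sums[OF assms(2,6)] by (simp add: P_def m_def comp_def algebra_simps)
  then have edge_sums: "bij_betw (\<lambda>e. \<Sum>v\<in>e. S2n_label \<phi> n t v) (S2n_E X Y E E1 E2 n)
      {m..<m + (int n + 1) * int (card E)}"
    unfolding S2n_E_eq_image[OF assms(2,4,5)] P_def[symmetric] by (rule bij_betw_image_of_comp)
  then have card_edges: "int (card (S2n_E X Y E E1 E2 n)) = (int n + 1) * int (card E)"
    by (simp add: bij_betw_same_card)
  have "x \<noteq> y" if "(x, y) \<in> P" for x y
    using that \<open>X \<inter> Y = {}\<close> by (auto simp: P_def oriented_edges_def)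
  then have "\<forall>e\<in>S2n_E X Y E E1 E2 n. \<exists>x y. x \<noteq> y \<and> e = {x, y}"
    unfolding S2n_E_eq_image[OF assms(2,4,5)] P_def[symmetric] S2n_edge_def by fastforce
  then have "int (card (S2n_V X Y n)) + int (card (S2n_E X Y E E1 E2 n)) + m
      \<in> sigma (S2n_V X Y n) (S2n_E X Y E E1 E2 n)"
    by (rule sigma_if_consecutive_edge_sums[OF labels edge_sums[folded card_edges]])
  moreover have "int (card (S2n_V X Y n)) + int (card (S2n_E X Y E E1 E2 n)) + m
      = (int n + 1) * (k - 2) + int t + 2"
    by (simp add: vertices card_edges card_cartesian_product m_def s_def algebra_simps)
  ultimately show ?thesis by simp
qed

theorem mainTheorem12:
  fixes V X Y :: "'a set" and E E1 E2 :: "'a set set"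
  assumes "simple_graph V E"
    and "bipartite_with V E X Y"
    and "super_edge_magic V E"
    and "E1 \<subseteq> E" and "E2 \<subseteq> E" and "E1 \<union> E2 = E" and "E1 \<inter> E2 = {}"
  shows "\<forall>M::nat. eventually
           (\<lambda>n. enat M \<le> ecard (sigma (S2n_V X Y n) (S2n_E X Y E E1 E2 n))) sequentially"
proof
  fix M :: nat
  obtain f k where labeling: "sem_labeling V E f k"
    using assms(3) by (auto simp: super_edge_magic_def)
  have "enat M \<le> ecard (sigma (S2n_V X Y n) (S2n_E X Y E E1 E2 n))" if "M \<le> n" for n
  proof -
    let ?valence = "\<lambda>t. (int n + 1) * (k - 2) + int t + 2"
    have valences: "?valence ` {0..n} \<subseteq> sigma (S2n_V X Y n) (S2n_E X Y E E1 E2 n)"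
      using S2n_valence_in_sigma[OF assms(1,2) labeling assms(6,7)] by auto
    have "enat M \<le> enat (card (?valence ` {0..n}))"
      using that by (simp add: card_image inj_on_def)
    also have "\<dots> \<le> ecard (sigma (S2n_V X Y n) (S2n_E X Y E E1 E2 n))"
      using valences by (rule card_le_ecard[rotated]) simp
    finally show ?thesis .
  qed
  then show "eventually (\<lambda>n. enat M \<le> ecard (sigma (S2n_V X Y n) (S2n_E X Y E E1 E2 n))) sequentially"
    by (auto simp: eventually_sequentially)
qed

end
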